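(* Fix $1\ge \rho_+>\rho_-\ge 0$. There exist constants $c<\infty$ and $b>0$, independent of $N$, such that for every positive integer $N$, every probability measure $\mu_N$ on $\{0,1\}^{[-N,N]}$ and every $t>0$, $$\|\mu_N S_t-\mu^{\rm st}_N\|\le c\,N\,e^{-bN^{-2}t}.$$
   Context: For a positive integer $N$, consider the continuous-time Markov process on $\{0,1\}^{[-N,N]}$ (with $[-N,N]$ the integers from $-N$ to $N$) with generator $L=L_0+L'$, where for $f:\{0,1\}^{[-N,N]}\to\mathbb R$, $$L_0 f(\eta)=\frac12\sum_{x=-N}^{N-1}[f(\eta^{(x,x+1)})-f(\eta)],$$ $\eta^{(x,x+1)}$ being $\eta$ with the values at $x$ and $x+1$ exchanged, and $$L'f(\eta)=\rho_+[f(\eta^{(+,N)})-f(\eta)]+(1-\rho_+)[f(\eta^{(-,N)})-f(\eta)]+\rho_-[f(\eta^{(+,-N)})-f(\eta)]+(1-\rho_-)[f(\eta^{(-,-N)})-f(\eta)],$$ where $\eta^{(+,x)}$ (resp. $\eta^{(-,x)}$) equals $\eta$ except that its value at $x$ is set to $1$ (resp. $0$). This process has a unique stationary probability measure $\mu^{\rm st}_N$. For a probability measure $\mu_N$, $\mu_NS_t$ denotes the law at time $t$ of the process started with law $\mu_N$. For a signed measure $\lambda$ on $\{0,1\}^{[-N,N]}$, $\|\lambda\|=\sum_\eta|\lambda(\eta)|$. *)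

theory Defs
  imports "HOL-Analysis.Analysis"
begin

text \<open>Configurations: elements of {0,1}^[-N,N], represented as functions
  int => bool that are False (i.e. 0) outside [-N,N].\<close>
type_synonym config = "int \<Rightarrow> bool"

definition configs :: "nat \<Rightarrow> config set" where
  "configs N = {\<eta>. \<forall>x. x \<notin> {- int N .. int N} \<longrightarrow> \<not> \<eta> x}"

definition swp :: "int \<Rightarrow> config \<Rightarrow> config" where
  "swp x \<eta> = \<eta>(x := \<eta> (x + 1), x + 1 := \<eta> x)"

definition gen :: "nat \<Rightarrow> real \<Rightarrow> real \<Rightarrow> (config \<Rightarrow> real) \<Rightarrow> config \<Rightarrow> real" where
  "gen N rp rm f \<eta> =
     (1/2) * (\<Sum>x\<in>{- int N .. int N - 1}. f (swp x \<eta>) - f \<eta>)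
     + rp * (f (\<eta>(int N := True)) - f \<eta>)
     + (1 - rp) * (f (\<eta>(int N := False)) - f \<eta>)
     + rm * (f (\<eta>(- int N := True)) - f \<eta>)
     + (1 - rm) * (f (\<eta>(- int N := False)) - f \<eta>)"

definition semigroup :: "nat \<Rightarrow> real \<Rightarrow> real \<Rightarrow> real \<Rightarrow> (config \<Rightarrow> real) \<Rightarrow> config \<Rightarrow> real" where
  "semigroup N rp rm t f \<eta> = (\<Sum>n. t ^ n / fact n * ((gen N rp rm ^^ n) f) \<eta>)"

definition law :: "nat \<Rightarrow> real \<Rightarrow> real \<Rightarrow> (config \<Rightarrow> real) \<Rightarrow> real \<Rightarrow> config \<Rightarrow> real" where
  "law N rp rm \<mu> t \<zeta> =
     (\<Sum>\<eta>\<in>configs N. \<mu> \<eta> * semigroup N rp rm t (\<lambda>\<xi>. if \<xi> = \<zeta> then 1 else 0) \<eta>)"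

definition prob_on :: "nat \<Rightarrow> (config \<Rightarrow> real) \<Rightarrow> bool" where
  "prob_on N \<mu> \<longleftrightarrow> (\<forall>\<eta>. \<eta> \<notin> configs N \<longrightarrow> \<mu> \<eta> = 0) \<and> (\<forall>\<eta>\<in>configs N. 0 \<le> \<mu> \<eta>)
      \<and> (\<Sum>\<eta>\<in>configs N. \<mu> \<eta>) = 1"

definition stat :: "nat \<Rightarrow> real \<Rightarrow> real \<Rightarrow> config \<Rightarrow> real" where
  "stat N rp rm = (THE \<mu>. prob_on N \<mu> \<and> (\<forall>t\<ge>0. \<forall>\<zeta>\<in>configs N. law N rp rm \<mu> t \<zeta> = \<mu> \<zeta>))"

definition tvnorm :: "nat \<Rightarrow> (config \<Rightarrow> real) \<Rightarrow> real" where
  "tvnorm N m = (\<Sum>\<eta>\<in>configs N. \<bar>m \<eta>\<bar>)"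

end

theory Submission
  imports Defs
begin

text \<open>Uniformization writes the semigroup as S_t = exp(-R t) \<Sum>_k (R t)^k / k! P^k with R = N + 2
  and a stochastic matrix P. Weight a discrepancy between two configurations at site y by
  (N + 1)^2 - y^2 \<ge> 2N + 1. Under the coupling in which both configurations make the same move, a
  single discrepancy performs a random walk killed at \<plusminus>N, and this concave weight decreases in
  expectation at rate at least 1/(N + 1)^2 times itself. Hence P contracts Lipschitz constants for the
  weighted Hamming distance by q = 1 - 1/((N + 1)^2 R), so for |g| \<le> 1 the oscillation of P^k g is at
  most 2 (N + 1)^2 q^k and that of S_t g at most 2 (N + 1)^2 exp(-t/(N + 1)^2). This yields convergence
  of P^k to a stationary law, its uniqueness, and the total variation bound; the prefactor (N + 1)^2
  becomes 8N by also using the trivial bound 2.\<close>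

section \<open>Exponentially weighted series\<close>

lemma alternating_binomial_sum_Suc:
  fixes u :: "nat \<Rightarrow> real"
  shows "(\<Sum>k\<le>Suc n. real (Suc n choose k) * (-1)^(Suc n - k) * u k)
     = (\<Sum>k\<le>n. real (n choose k) * (-1)^(n - k) * u (Suc k))
       - (\<Sum>k\<le>n. real (n choose k) * (-1)^(n - k) * u k)"
proof -
  have sign: "(-1::real)^(n - j) = - ((-1)^(n - Suc j))" if "j < n" for j
  proof -
    have "n - j = Suc (n - Suc j)" using that by simp
    then show ?thesis by simp
  qed
  have "(\<Sum>k\<le>Suc n. real (Suc n choose k) * (-1)^(Suc n - k) * u k)
     = (-1)^(Suc n) * u 0 + (\<Sum>j\<le>n. real (Suc n choose Suc j) * (-1)^(n - j) * u (Suc j))"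
    by (subst sum.atMost_Suc_shift) simp
  also have "(\<Sum>j\<le>n. real (Suc n choose Suc j) * (-1)^(n - j) * u (Suc j))
     = (\<Sum>j\<le>n. real (n choose j) * (-1)^(n - j) * u (Suc j))
       + (\<Sum>j<n. real (n choose Suc j) * (-1)^(n - j) * u (Suc j))"
    by (simp add: sum.distrib[symmetric] ring_distribs lessThan_Suc_atMost[symmetric])
  also have "(\<Sum>j<n. real (n choose Suc j) * (-1)^(n - j) * u (Suc j))
     = - (\<Sum>j<n. real (n choose Suc j) * (-1)^(n - Suc j) * u (Suc j))"
    by (auto simp add: sign sum_negf[symmetric] intro!: sum.cong)
  also have "(\<Sum>j<n. real (n choose Suc j) * (-1)^(n - Suc j) * u (Suc j))
     = (\<Sum>k\<le>n. real (n choose k) * (-1)^(n - k) * u k) - (-1)^n * u 0"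
    by (cases n) (simp_all only: sum.atMost_Suc_shift lessThan_Suc_atMost, simp_all)
  finally show ?thesis by simp
qed

lemma summable_exp_weighted:
  fixes x B :: real
  assumes "\<And>k. \<bar>a k\<bar> \<le> B"
  shows "summable (\<lambda>k. \<bar>x^k / fact k * a k\<bar>)"
proof (rule summable_comparison_test)
  show "summable (\<lambda>k. B * (inverse (fact k) * \<bar>x\<bar>^k))"
    by (intro summable_mult summable_exp)
  have "\<bar>x^k / fact k * a k\<bar> \<le> B * (inverse (fact k) * \<bar>x\<bar>^k)" for k
    using mult_right_mono[OF assms[of k], of "inverse (fact k) * \<bar>x\<bar>^k"]
    by (simp add: abs_mult power_abs divide_inverse mult_ac)
  then show "\<exists>N. \<forall>k\<ge>N. norm \<bar>x^k / fact k * a k\<bar> \<le> B * (inverse (fact k) * \<bar>x\<bar>^k)"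
    by auto
qed

lemma exp_weighted_geometric_sums:
  fixes x r M :: real
  shows "(\<lambda>k. x^k / fact k * (M * r^k)) sums (M * exp (x * r))"
proof -
  have "(\<lambda>k. M * ((x * r)^k /\<^sub>R fact k)) sums (M * exp (x * r))"
    by (intro sums_mult exp_converges)
  then show ?thesis
    by (simp add: power_mult_distrib divide_inverse mult_ac)
qed

lemma abs_suminf_exp_weighted_le:
  fixes x r M :: real
  assumes "0 \<le> x" and "\<And>k. \<bar>a k\<bar> \<le> M * r^k"
  shows "\<bar>\<Sum>k. x^k / fact k * a k\<bar> \<le> M * exp (x * r)"
proof -
  have bound: "\<bar>x^k / fact k * a k\<bar> \<le> x^k / fact k * (M * r^k)" for k
    using mult_left_mono[OF assms(2)[of k], of "x^k / fact k"] assms(1) by (simp add: abs_mult)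
  have sg: "summable (\<lambda>k. x^k / fact k * (M * r^k))"
    using exp_weighted_geometric_sums by (rule sums_summable)
  have sa: "summable (\<lambda>k. \<bar>x^k / fact k * a k\<bar>)"
    using bound sg by (intro summable_rabs_comparison_test) auto
  have "\<bar>\<Sum>k. x^k / fact k * a k\<bar> \<le> (\<Sum>k. \<bar>x^k / fact k * a k\<bar>)"
    using sa by (rule summable_rabs)
  also have "\<dots> \<le> (\<Sum>k. x^k / fact k * (M * r^k))"
    using bound sa sg by (rule suminf_le)
  also have "\<dots> = M * exp (x * r)"
    using exp_weighted_geometric_sums by (rule sums_unique[symmetric])
  finally show ?thesis .
qed

lemma exp_series_binomial_term:
  fixes x c :: real
  assumes "i \<le> k"
  shows "x^i / fact i * c * ((-x)^(k - i) / fact (k - i)) = x^k / fact k * (real (k choose i) * (-1)^(k - i) * c)"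
proof -
  have "x^k = x^i * x^(k - i)"
    using assms by (simp add: power_add[symmetric])
  moreover have "real (k choose i) = fact k / (fact i * fact (k - i))"
    using binomial_fact[OF assms] by simp
  ultimately show ?thesis
    by (simp add: power_minus[of x] field_simps)
qed

section \<open>Uniformized Markov chains on a finite state space\<close>

definition lipschitz_wrt :: "'a set \<Rightarrow> ('a \<Rightarrow> 'a \<Rightarrow> real) \<Rightarrow> real \<Rightarrow> ('a \<Rightarrow> real) \<Rightarrow> bool" where
  "lipschitz_wrt S d K g \<longleftrightarrow> (\<forall>\<eta>\<in>S. \<forall>\<xi>\<in>S. \<bar>g \<eta> - g \<xi>\<bar> \<le> K * d \<eta> \<xi>)"

text \<open>The continuous-time chain on a finite set S that jumps from \<eta> to \<xi> at rate R p(\<eta>, \<xi>),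
  for a stochastic matrix p.\<close>

locale uniformized_chain =
  fixes S :: "'a set" and p :: "'a \<Rightarrow> 'a \<Rightarrow> real" and R :: real
  assumes finite_S: "finite S"
    and kernel_nonneg: "\<eta> \<in> S \<Longrightarrow> \<xi> \<in> S \<Longrightarrow> 0 \<le> p \<eta> \<xi>"
    and kernel_sum: "\<eta> \<in> S \<Longrightarrow> (\<Sum>\<xi>\<in>S. p \<eta> \<xi>) = 1"
    and rate_pos: "0 < R"
begin

definition step :: "('a \<Rightarrow> real) \<Rightarrow> 'a \<Rightarrow> real" where
  "step g \<eta> = (\<Sum>\<xi>\<in>S. p \<eta> \<xi> * g \<xi>)"

definition generator :: "('a \<Rightarrow> real) \<Rightarrow> 'a \<Rightarrow> real" where
  "generator g \<eta> = R * (step g \<eta> - g \<eta>)"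

definition transition :: "real \<Rightarrow> ('a \<Rightarrow> real) \<Rightarrow> 'a \<Rightarrow> real" where
  "transition t f \<eta> = (\<Sum>n. t ^ n / fact n * (generator ^^ n) f \<eta>)"

definition evolve :: "('a \<Rightarrow> real) \<Rightarrow> real \<Rightarrow> 'a \<Rightarrow> real" where
  "evolve \<mu> t \<zeta> = (\<Sum>\<eta>\<in>S. \<mu> \<eta> * transition t (indicator {\<zeta>}) \<eta>)"

definition distribution :: "('a \<Rightarrow> real) \<Rightarrow> bool" where
  "distribution \<mu> \<longleftrightarrow> (\<forall>\<eta>. \<eta> \<notin> S \<longrightarrow> \<mu> \<eta> = 0) \<and> (\<forall>\<eta>\<in>S. 0 \<le> \<mu> \<eta>) \<and> (\<Sum>\<eta>\<in>S. \<mu> \<eta>) = 1"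

definition stationary :: "('a \<Rightarrow> real) \<Rightarrow> bool" where
  "stationary \<pi> \<longleftrightarrow> distribution \<pi> \<and> (\<forall>t\<ge>0. \<forall>\<zeta>\<in>S. evolve \<pi> t \<zeta> = \<pi> \<zeta>)"

lemma step_sum: "step (\<lambda>\<xi>. \<Sum>i\<in>I. c i * h i \<xi>) \<eta> = (\<Sum>i\<in>I. c i * step (h i) \<eta>)"
  unfolding step_def by (simp add: sum_distrib_left mult_ac sum.swap[of _ I])

lemma funpow_step_sum: "(step ^^ k) (\<lambda>\<xi>. \<Sum>i\<in>I. c i * h i \<xi>) \<eta> = (\<Sum>i\<in>I. c i * (step ^^ k) (h i) \<eta>)"
proof (induction k arbitrary: \<eta>)
  case (Suc k)
  then have "(step ^^ k) (\<lambda>\<xi>. \<Sum>i\<in>I. c i * h i \<xi>) = (\<lambda>\<xi>. \<Sum>i\<in>I. c i * (step ^^ k) (h i) \<xi>)"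
    by auto
  then show ?case by (simp add: step_sum)
qed simp

lemma generator_sum: "generator (\<lambda>\<xi>. \<Sum>i\<in>I. c i * h i \<xi>) \<eta> = (\<Sum>i\<in>I. c i * generator (h i) \<eta>)"
  unfolding generator_def step_sum by (simp add: sum_distrib_left sum_subtractf algebra_simps)

lemma funpow_generator_sum:
  "(generator ^^ n) (\<lambda>\<xi>. \<Sum>i\<in>I. c i * h i \<xi>) \<eta> = (\<Sum>i\<in>I. c i * (generator ^^ n) (h i) \<eta>)"
proof (induction n arbitrary: \<eta>)
  case (Suc n)
  then have "(generator ^^ n) (\<lambda>\<xi>. \<Sum>i\<in>I. c i * h i \<xi>) = (\<lambda>\<xi>. \<Sum>i\<in>I. c i * (generator ^^ n) (h i) \<xi>)"
    by auto
  then show ?case by (simp add: generator_sum)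
qed simp

lemma step_diff_abs_le:
  assumes "\<forall>\<xi>\<in>S. \<bar>g \<xi> - c\<bar> \<le> B" and "\<eta> \<in> S"
  shows "\<bar>step g \<eta> - c\<bar> \<le> B"
proof -
  have "step g \<eta> - c = (\<Sum>\<xi>\<in>S. p \<eta> \<xi> * (g \<xi> - c))"
    using kernel_sum[OF assms(2)]
    by (simp add: step_def right_diff_distrib sum_subtractf sum_distrib_right[symmetric])
  also have "\<bar>\<dots>\<bar> \<le> (\<Sum>\<xi>\<in>S. p \<eta> \<xi> * B)"
    using assms kernel_nonneg
    by (intro order_trans[OF sum_abs] sum_mono) (simp add: abs_mult mult_left_mono)
  also have "\<dots> = B"
    using kernel_sum[OF assms(2)] by (simp add: sum_distrib_right[symmetric])
  finally show ?thesis .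
qed

lemma funpow_step_abs_le:
  assumes "\<forall>\<xi>\<in>S. \<bar>g \<xi>\<bar> \<le> B" and "\<eta> \<in> S"
  shows "\<bar>(step ^^ k) g \<eta>\<bar> \<le> B"
  using assms(2)
proof (induction k arbitrary: \<eta>)
  case (Suc k)
  then show ?case using step_diff_abs_le[of "(step ^^ k) g" 0 B \<eta>] by simp
qed (use assms(1) in simp)

lemma funpow_step_nonneg:
  assumes "\<forall>\<xi>\<in>S. 0 \<le> g \<xi>" and "\<eta> \<in> S"
  shows "0 \<le> (step ^^ k) g \<eta>"
  using assms(2)
proof (induction k arbitrary: \<eta>)
  case (Suc k)
  then show ?case by (simp add: step_def kernel_nonneg sum_nonneg)
qed (use assms(1) in simp)

lemma funpow_step_cong:
  assumes "\<forall>\<xi>\<in>S. g \<xi> = h \<xi>" and "\<eta> \<in> S"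
  shows "(step ^^ k) g \<eta> = (step ^^ k) h \<eta>"
  using assms(2)
proof (induction k arbitrary: \<eta>)
  case (Suc k)
  then show ?case by (simp add: step_def)
qed (use assms(1) in simp)

lemma step_const: "\<eta> \<in> S \<Longrightarrow> step (\<lambda>_. c) \<eta> = c"
  using kernel_sum by (simp add: step_def sum_distrib_right[symmetric])

lemma funpow_step_const: "\<eta> \<in> S \<Longrightarrow> (step ^^ k) (\<lambda>_. c) \<eta> = c"
proof (induction k arbitrary: \<eta>)
  case (Suc k)
  have "(step ^^ Suc k) (\<lambda>_. c) \<eta> = (step ^^ k) (step (\<lambda>_. c)) \<eta>"
    by (simp only: funpow_Suc_right comp_def)
  also have "\<dots> = (step ^^ k) (\<lambda>_. c) \<eta>"
    using Suc.prems step_const by (intro funpow_step_cong) auto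
  finally show ?case using Suc by simp
qed simp

lemma funpow_step_eq_sum_indicator:
  assumes "\<eta> \<in> S"
  shows "(step ^^ k) h \<eta> = (\<Sum>\<zeta>\<in>S. h \<zeta> * (step ^^ k) (indicator {\<zeta>}) \<eta>)"
proof -
  have "\<forall>\<xi>\<in>S. h \<xi> = (\<Sum>\<zeta>\<in>S. h \<zeta> * indicator {\<zeta>} \<xi>)"
    using finite_S by (simp add: indicator_def if_distrib cong: if_cong)
  then have "(step ^^ k) h \<eta> = (step ^^ k) (\<lambda>\<xi>. \<Sum>\<zeta>\<in>S. h \<zeta> * indicator {\<zeta>} \<xi>) \<eta>"
    using assms by (rule funpow_step_cong)
  also have "\<dots> = (\<Sum>\<zeta>\<in>S. h \<zeta> * (step ^^ k) (indicator {\<zeta>}) \<eta>)"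
    by (rule funpow_step_sum)
  finally show ?thesis .
qed

lemma bounded_on_S: "\<forall>\<xi>\<in>S. \<bar>f \<xi>\<bar> \<le> (\<Sum>\<zeta>\<in>S. \<bar>f \<zeta>::real\<bar>)"
proof
  fix \<xi> assume "\<xi> \<in> S"
  then show "\<bar>f \<xi>\<bar> \<le> (\<Sum>\<zeta>\<in>S. \<bar>f \<zeta>\<bar>)"
    using finite_S member_le_sum[of \<xi> S "\<lambda>\<zeta>. \<bar>f \<zeta>\<bar>"] by simp
qed

lemma funpow_generator:
  "(generator ^^ n) f \<eta> = R^n * (\<Sum>k\<le>n. real (n choose k) * (-1)^(n - k) * (step ^^ k) f \<eta>)"
proof (induction n arbitrary: \<eta>)
  case (Suc n)
  have "(generator ^^ n) f = (\<lambda>\<xi>. \<Sum>k\<le>n. (R^n * (real (n choose k) * (-1)^(n - k))) * (step ^^ k) f \<xi>)"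
    using Suc.IH by (auto simp: sum_distrib_left mult.assoc)
  then have "(generator ^^ Suc n) f \<eta>
      = (\<Sum>k\<le>n. (R^n * (real (n choose k) * (-1)^(n - k))) * (R * ((step ^^ Suc k) f \<eta> - (step ^^ k) f \<eta>)))"
    by (simp add: generator_sum generator_def)
  also have "\<dots> = R^Suc n * ((\<Sum>k\<le>n. real (n choose k) * (-1)^(n - k) * (step ^^ Suc k) f \<eta>)
      - (\<Sum>k\<le>n. real (n choose k) * (-1)^(n - k) * (step ^^ k) f \<eta>))"
    by (simp add: sum_distrib_left sum_subtractf[symmetric] algebra_simps)
  also have "\<dots> = R^Suc n * (\<Sum>k\<le>Suc n. real (Suc n choose k) * (-1)^(Suc n - k) * (step ^^ k) f \<eta>)"
    by (simp only: alternating_binomial_sum_Suc)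
  finally show ?case .
qed simp

text \<open>Uniformization: exp(t R (P - I)) = e^{-Rt} exp(t R P), where the Cauchy product of the two
  exponential series turns the binomial expansion of (P - I)^n back into powers of P.\<close>

lemma transition_sums:
  assumes "\<eta> \<in> S"
  shows "(\<lambda>n. t^n / fact n * (generator ^^ n) f \<eta>)
           sums (exp (-(R * t)) * (\<Sum>k. (R * t)^k / fact k * (step ^^ k) f \<eta>))"
proof -
  define a where "a k = (R * t)^k / fact k * (step ^^ k) f \<eta>" for k
  define b where "b k = (-(R * t))^k / fact k" for k
  have "summable (\<lambda>k. \<bar>a k\<bar>)"
    unfolding a_def by (rule summable_exp_weighted, rule funpow_step_abs_le[OF bounded_on_S assms])
  moreover have "summable (\<lambda>k. \<bar>b k\<bar>)"
    using summable_exp_weighted[of "\<lambda>_. 1" 1 "-(R * t)"] by (simp add: b_def)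
  ultimately have "(\<lambda>k. \<Sum>i\<le>k. a i * b (k - i)) sums ((\<Sum>k. a k) * (\<Sum>k. b k))"
    by (intro Cauchy_product_sums) auto
  moreover have "(\<Sum>k. b k) = exp (-(R * t))"
    using exp_weighted_geometric_sums[of "-(R * t)" 1 1] by (simp add: b_def sums_iff)
  moreover have "(\<Sum>i\<le>k. a i * b (k - i)) = t^k / fact k * (generator ^^ k) f \<eta>" for k
  proof -
    have "a i * b (k - i) = (R * t)^k / fact k * (real (k choose i) * (-1)^(k - i) * (step ^^ i) f \<eta>)"
      if "i \<le> k" for i
      unfolding a_def b_def by (rule exp_series_binomial_term[OF that])
    then have "(\<Sum>i\<le>k. a i * b (k - i))
        = (R * t)^k / fact k * (\<Sum>i\<le>k. real (k choose i) * (-1)^(k - i) * (step ^^ i) f \<eta>)"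
      by (simp add: sum_distrib_left)
    then show ?thesis
      by (simp only: funpow_generator) (simp add: power_mult_distrib)
  qed
  ultimately show ?thesis
    by (simp add: a_def mult.commute)
qed

lemma transition_eq_uniformized:
  "\<eta> \<in> S \<Longrightarrow> transition t f \<eta> = exp (-(R * t)) * (\<Sum>k. (R * t)^k / fact k * (step ^^ k) f \<eta>)"
  unfolding transition_def by (rule sums_unique[OF transition_sums, symmetric])

lemma summable_uniformized:
  "\<eta> \<in> S \<Longrightarrow> summable (\<lambda>k. (R * t)^k / fact k * (step ^^ k) f \<eta>)"
  by (rule summable_rabs_cancel, rule summable_exp_weighted, rule funpow_step_abs_le[OF bounded_on_S])

lemma transition_cong:
  assumes "\<forall>\<xi>\<in>S. f \<xi> = g \<xi>" and "\<eta> \<in> S"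
  shows "transition t f \<eta> = transition t g \<eta>"
  using funpow_step_cong[OF assms] by (simp add: transition_eq_uniformized[OF assms(2)])

lemma transition_sum:
  assumes "\<eta> \<in> S"
  shows "transition t (\<lambda>\<xi>. \<Sum>i\<in>I. c i * h i \<xi>) \<eta> = (\<Sum>i\<in>I. c i * transition t (h i) \<eta>)"
proof -
  define u where "u i n = t^n / fact n * (generator ^^ n) (h i) \<eta>" for i n
  have "summable (u i)" for i
    unfolding u_def using transition_sums[OF assms] by (rule sums_summable)
  then have "(\<Sum>n. \<Sum>i\<in>I. c i * u i n) = (\<Sum>i\<in>I. c i * suminf (u i))"
    by (subst suminf_sum) (auto intro: summable_mult simp: suminf_mult)
  then show ?thesis
    unfolding transition_def funpow_generator_sum u_def by (simp add: sum_distrib_left mult_ac)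
qed

lemma transition_abs_le:
  assumes "\<forall>\<xi>\<in>S. \<bar>g \<xi>\<bar> \<le> B" and "\<eta> \<in> S" and "0 \<le> t"
  shows "\<bar>transition t g \<eta>\<bar> \<le> B"
proof -
  have "\<bar>\<Sum>k. (R * t)^k / fact k * (step ^^ k) g \<eta>\<bar> \<le> B * exp (R * t * 1)"
    using assms(3) rate_pos funpow_step_abs_le[OF assms(1,2)] by (intro abs_suminf_exp_weighted_le) simp_all
  then show ?thesis
    by (simp add: transition_eq_uniformized[OF assms(2)] abs_mult exp_minus field_simps)
qed

lemma transition_invariant:
  assumes inv: "\<And>h. (\<Sum>\<eta>\<in>S. \<pi> \<eta> * step h \<eta>) = (\<Sum>\<eta>\<in>S. \<pi> \<eta> * h \<eta>)"
  shows "(\<Sum>\<eta>\<in>S. \<pi> \<eta> * transition t h \<eta>) = (\<Sum>\<eta>\<in>S. \<pi> \<eta> * h \<eta>)"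
proof -
  define c where "c k = (R * t)^k / fact k" for k
  have funpow_inv: "(\<Sum>\<eta>\<in>S. \<pi> \<eta> * (step ^^ k) h \<eta>) = (\<Sum>\<eta>\<in>S. \<pi> \<eta> * h \<eta>)" for k
    by (induction k) (simp_all add: inv)
  have summable: "summable (\<lambda>k. c k * (\<pi> \<eta> * (step ^^ k) h \<eta>))" if "\<eta> \<in> S" for \<eta>
    using summable_mult2[OF summable_uniformized[OF that, where t=t and f=h], where c="\<pi> \<eta>"] by (simp add: c_def mult_ac)
  have "(\<Sum>\<eta>\<in>S. \<pi> \<eta> * transition t h \<eta>)
      = exp (-(R * t)) * (\<Sum>\<eta>\<in>S. \<Sum>k. c k * (\<pi> \<eta> * (step ^^ k) h \<eta>))"
    unfolding sum_distrib_left
  proof (rule sum.cong[OF refl])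
    fix \<eta> assume "\<eta> \<in> S"
    then show "\<pi> \<eta> * transition t h \<eta> = exp (-(R * t)) * (\<Sum>k. c k * (\<pi> \<eta> * (step ^^ k) h \<eta>))"
      using suminf_mult[OF summable_uniformized[OF \<open>\<eta> \<in> S\<close>, where t=t and f=h], where c="\<pi> \<eta>"]
      by (simp add: transition_eq_uniformized c_def mult_ac)
  qed
  also have "(\<Sum>\<eta>\<in>S. \<Sum>k. c k * (\<pi> \<eta> * (step ^^ k) h \<eta>)) = (\<Sum>k. c k * (\<Sum>\<eta>\<in>S. \<pi> \<eta> * h \<eta>))"
    using summable by (simp add: suminf_sum[symmetric] sum_distrib_left[symmetric] funpow_inv)
  also have "\<dots> = (\<Sum>\<eta>\<in>S. \<pi> \<eta> * h \<eta>) * exp (R * t * 1)"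
    using exp_weighted_geometric_sums[of "R * t" "\<Sum>\<eta>\<in>S. \<pi> \<eta> * h \<eta>" 1]
    by (simp add: c_def sums_iff mult_ac)
  finally show ?thesis by (simp add: exp_minus field_simps)
qed

lemma evolve_sum:
  "(\<Sum>\<zeta>\<in>S. s \<zeta> * evolve \<mu> t \<zeta>) = (\<Sum>\<eta>\<in>S. \<mu> \<eta> * transition t s \<eta>)"
proof -
  have "transition t s \<eta> = (\<Sum>\<zeta>\<in>S. s \<zeta> * transition t (indicator {\<zeta>}) \<eta>)" if "\<eta> \<in> S" for \<eta>
  proof -
    have "\<forall>\<xi>\<in>S. s \<xi> = (\<Sum>\<zeta>\<in>S. s \<zeta> * indicator {\<zeta>} \<xi>)"
      using finite_S by (simp add: indicator_def if_distrib cong: if_cong)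
    then have "transition t s \<eta> = transition t (\<lambda>\<xi>. \<Sum>\<zeta>\<in>S. s \<zeta> * indicator {\<zeta>} \<xi>) \<eta>"
      using that by (rule transition_cong)
    also have "\<dots> = (\<Sum>\<zeta>\<in>S. s \<zeta> * transition t (indicator {\<zeta>}) \<eta>)"
      using that by (rule transition_sum)
    finally show ?thesis .
  qed
  moreover have "(\<Sum>\<zeta>\<in>S. s \<zeta> * evolve \<mu> t \<zeta>)
      = (\<Sum>\<eta>\<in>S. \<mu> \<eta> * (\<Sum>\<zeta>\<in>S. s \<zeta> * transition t (indicator {\<zeta>}) \<eta>))"
    unfolding evolve_def sum_distrib_left by (subst sum.swap) (simp add: mult_ac)
  ultimately show ?thesis by simp
qed

lemma distribution_sum_diff_le:
  assumes "distribution \<mu>" and "distribution \<nu>"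
    and "\<And>\<eta> \<xi>. \<eta> \<in> S \<Longrightarrow> \<xi> \<in> S \<Longrightarrow> G \<eta> - G \<xi> \<le> M"
  shows "(\<Sum>\<eta>\<in>S. \<mu> \<eta> * G \<eta>) - (\<Sum>\<xi>\<in>S. \<nu> \<xi> * G \<xi>) \<le> M"
proof -
  have \<mu>: "(\<Sum>\<eta>\<in>S. \<mu> \<eta>) = 1" "\<And>\<eta>. \<eta> \<in> S \<Longrightarrow> 0 \<le> \<mu> \<eta>"
    and \<nu>: "(\<Sum>\<xi>\<in>S. \<nu> \<xi>) = 1" "\<And>\<xi>. \<xi> \<in> S \<Longrightarrow> 0 \<le> \<nu> \<xi>"
    using assms(1,2) by (auto simp: distribution_def)
  have "(\<Sum>\<eta>\<in>S. \<Sum>\<xi>\<in>S. \<mu> \<eta> * \<nu> \<xi> * G \<eta>) = (\<Sum>\<eta>\<in>S. \<mu> \<eta> * G \<eta>)"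
    by (simp add: sum_distrib_left[symmetric] sum_distrib_right[symmetric] \<nu>(1) mult.commute mult.left_commute)
  moreover have "(\<Sum>\<eta>\<in>S. \<Sum>\<xi>\<in>S. \<mu> \<eta> * \<nu> \<xi> * G \<xi>) = (\<Sum>\<xi>\<in>S. \<nu> \<xi> * G \<xi>)"
    by (subst sum.swap)
       (simp add: sum_distrib_left[symmetric] sum_distrib_right[symmetric] \<mu>(1) mult.commute mult.left_commute)
  ultimately have "(\<Sum>\<eta>\<in>S. \<mu> \<eta> * G \<eta>) - (\<Sum>\<xi>\<in>S. \<nu> \<xi> * G \<xi>)
      = (\<Sum>\<eta>\<in>S. \<Sum>\<xi>\<in>S. \<mu> \<eta> * \<nu> \<xi> * (G \<eta> - G \<xi>))"
    by (simp add: right_diff_distrib sum_subtractf)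
  also have "\<dots> \<le> (\<Sum>\<eta>\<in>S. \<Sum>\<xi>\<in>S. \<mu> \<eta> * \<nu> \<xi> * M)"
    using assms(3) \<mu>(2) \<nu>(2) by (intro sum_mono mult_left_mono) auto
  also have "\<dots> = M"
    by (simp add: sum_distrib_left[symmetric] sum_distrib_right[symmetric] \<mu>(1) \<nu>(1))
  finally show ?thesis .
qed

lemma lipschitz_contraction_mixing:
  assumes contraction: "\<And>K g. 0 \<le> K \<Longrightarrow> lipschitz_wrt S d K g \<Longrightarrow> lipschitz_wrt S d (K * q) (step g)"
    and "0 \<le> q" and "0 < \<delta>"
    and d_nonneg: "\<And>\<eta> \<xi>. \<eta> \<in> S \<Longrightarrow> \<xi> \<in> S \<Longrightarrow> 0 \<le> d \<eta> \<xi>"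
    and d_separated: "\<And>\<eta> \<xi>. \<eta> \<in> S \<Longrightarrow> \<xi> \<in> S \<Longrightarrow> \<eta> \<noteq> \<xi> \<Longrightarrow> \<delta> \<le> d \<eta> \<xi>"
    and d_bounded: "\<And>\<eta> \<xi>. \<eta> \<in> S \<Longrightarrow> \<xi> \<in> S \<Longrightarrow> d \<eta> \<xi> \<le> D"
    and g: "\<forall>\<xi>\<in>S. \<bar>g \<xi>\<bar> \<le> 1" and "\<eta> \<in> S" and "\<xi> \<in> S"
  shows "\<bar>(step ^^ k) g \<eta> - (step ^^ k) g \<xi>\<bar> \<le> 2 * D / \<delta> * q^k"
proof -
  have "lipschitz_wrt S d (2 / \<delta>) g"
    unfolding lipschitz_wrt_def
  proof (intro ballI)
    fix a b assume ab: "a \<in> S" "b \<in> S"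
    have "\<bar>g a\<bar> \<le> 1" "\<bar>g b\<bar> \<le> 1" using g ab by auto
    then have "\<bar>g a - g b\<bar> \<le> 2" by linarith
    show "\<bar>g a - g b\<bar> \<le> 2 / \<delta> * d a b"
    proof (cases "a = b")
      case False
      then have "2 \<le> 2 / \<delta> * d a b"
        using d_separated[OF ab] \<open>0 < \<delta>\<close> by (simp add: field_simps)
      with \<open>\<bar>g a - g b\<bar> \<le> 2\<close> show ?thesis by linarith
    qed (use d_nonneg[OF ab] \<open>0 < \<delta>\<close> in simp)
  qed
  then have "lipschitz_wrt S d (2 / \<delta> * q^k) ((step ^^ k) g)"
  proof (induction k)
    case (Suc k)
    have "lipschitz_wrt S d (2 / \<delta> * q^k * q) (step ((step ^^ k) g))"
      using Suc \<open>0 \<le> q\<close> \<open>0 < \<delta>\<close> by (intro contraction) auto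
    then show ?case by (simp add: mult_ac)
  qed simp
  then have "\<bar>(step ^^ k) g \<eta> - (step ^^ k) g \<xi>\<bar> \<le> 2 / \<delta> * q^k * d \<eta> \<xi>"
    using assms(8,9) by (simp add: lipschitz_wrt_def)
  also have "\<dots> \<le> 2 / \<delta> * q^k * D"
    using d_bounded[OF assms(8,9)] \<open>0 \<le> q\<close> \<open>0 < \<delta>\<close> by (intro mult_left_mono) auto
  finally show ?thesis by (simp add: field_simps)
qed

end

section \<open>Geometric mixing and the stationary distribution\<close>

locale mixing_uniformized_chain = uniformized_chain +
  fixes C q :: real
  assumes nonempty: "S \<noteq> {}"
    and q_nonneg: "0 \<le> q" and q_less_one: "q < 1"
    and mixing: "\<forall>\<xi>\<in>S. \<bar>g \<xi>\<bar> \<le> 1 \<Longrightarrow> \<eta> \<in> S \<Longrightarrow> \<xi> \<in> S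
                   \<Longrightarrow> \<bar>(step ^^ k) g \<eta> - (step ^^ k) g \<xi>\<bar> \<le> C * q^k"
begin

lemma transition_oscillation:
  assumes "\<forall>\<xi>\<in>S. \<bar>g \<xi>\<bar> \<le> 1" and "\<eta> \<in> S" and "\<xi> \<in> S" and "0 \<le> t"
  shows "\<bar>transition t g \<eta> - transition t g \<xi>\<bar> \<le> C * exp (- (R * (1 - q) * t))"
proof -
  define a where "a k = (step ^^ k) g \<eta> - (step ^^ k) g \<xi>" for k
  have "transition t g \<eta> - transition t g \<xi>
      = exp (-(R * t)) * ((\<Sum>k. (R * t)^k / fact k * (step ^^ k) g \<eta>) - (\<Sum>k. (R * t)^k / fact k * (step ^^ k) g \<xi>))"
    by (simp add: transition_eq_uniformized assms(2,3) right_diff_distrib)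
  also have "\<dots> = exp (-(R * t)) * (\<Sum>k. (R * t)^k / fact k * a k)"
    using suminf_diff[OF summable_uniformized[OF assms(2), where t=t and f=g]
        summable_uniformized[OF assms(3), where t=t and f=g]]
    by (simp add: a_def right_diff_distrib)
  also have "\<bar>\<dots>\<bar> \<le> exp (-(R * t)) * (C * exp (R * t * q))"
  proof -
    have "\<bar>\<Sum>k. (R * t)^k / fact k * a k\<bar> \<le> C * exp (R * t * q)"
      using rate_pos assms(4) mixing[OF assms(1-3)] unfolding a_def
      by (intro abs_suminf_exp_weighted_le) auto
    then show ?thesis by (simp add: abs_mult)
  qed
  also have "\<dots> = C * exp (- (R * (1 - q) * t))"
    by (simp add: mult_exp_exp algebra_simps)
  finally show ?thesis .
qed

lemma convergent_funpow_step:
  assumes g: "\<forall>\<xi>\<in>S. \<bar>g \<xi>\<bar> \<le> 1" and "\<eta> \<in> S"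
  shows "convergent (\<lambda>k. (step ^^ k) g \<eta>)"
proof -
  define u where "u k = (step ^^ k) g \<eta>" for k
  have bound: "\<bar>u (Suc k) - u k\<bar> \<le> C * q^k" for k
    unfolding u_def using mixing[OF g _ \<open>\<eta> \<in> S\<close>] \<open>\<eta> \<in> S\<close>
    by (simp add: step_diff_abs_le)
  have geometric: "summable (\<lambda>k. C * q^k)"
    using q_nonneg q_less_one by (intro summable_mult summable_geometric) simp
  have "summable (\<lambda>k. \<bar>u (Suc k) - u k\<bar>)"
    by (rule summable_rabs_comparison_test[OF _ geometric]) (use bound in auto)
  then have "convergent (\<lambda>n. \<Sum>k<n. u (Suc k) - u k)"
    by (simp add: summable_rabs_cancel flip: summable_iff_convergent)
  then have "convergent (\<lambda>n. (u n - u 0) + u 0)"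
    by (intro convergent_add convergent_const) (simp add: sum_lessThan_telescope)
  then show ?thesis unfolding u_def by simp
qed

definition limit_distribution :: "'a \<Rightarrow> 'a \<Rightarrow> real" where
  "limit_distribution \<eta>\<^sub>0 \<zeta> = (if \<zeta> \<in> S then lim (\<lambda>k. (step ^^ k) (indicator {\<zeta>}) \<eta>\<^sub>0) else 0)"

lemma tendsto_limit_distribution:
  assumes "\<eta>\<^sub>0 \<in> S" and "\<zeta> \<in> S"
  shows "(\<lambda>k. (step ^^ k) (indicator {\<zeta>}) \<eta>\<^sub>0) \<longlonglongrightarrow> limit_distribution \<eta>\<^sub>0 \<zeta>"
proof -
  have "\<forall>\<xi>\<in>S. \<bar>indicator {\<zeta>} \<xi> :: real\<bar> \<le> 1"
    by (simp add: indicator_def)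
  from convergent_funpow_step[OF this assms(1)] show ?thesis
    using assms(2) by (simp add: limit_distribution_def convergent_LIMSEQ_iff)
qed

lemma tendsto_funpow_step:
  assumes "\<eta>\<^sub>0 \<in> S"
  shows "(\<lambda>k. (step ^^ k) h \<eta>\<^sub>0) \<longlonglongrightarrow> (\<Sum>\<zeta>\<in>S. limit_distribution \<eta>\<^sub>0 \<zeta> * h \<zeta>)"
proof -
  have "(\<lambda>k. (step ^^ k) (indicator {\<zeta>}) \<eta>\<^sub>0) \<longlonglongrightarrow> limit_distribution \<eta>\<^sub>0 \<zeta>" if "\<zeta> \<in> S" for \<zeta>
    using tendsto_limit_distribution[OF assms that] .
  then have "(\<lambda>k. \<Sum>\<zeta>\<in>S. h \<zeta> * (step ^^ k) (indicator {\<zeta>}) \<eta>\<^sub>0)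
      \<longlonglongrightarrow> (\<Sum>\<zeta>\<in>S. h \<zeta> * limit_distribution \<eta>\<^sub>0 \<zeta>)"
    by (intro tendsto_sum tendsto_mult_left)
  moreover have "(\<lambda>k. (step ^^ k) h \<eta>\<^sub>0) = (\<lambda>k. \<Sum>\<zeta>\<in>S. h \<zeta> * (step ^^ k) (indicator {\<zeta>}) \<eta>\<^sub>0)"
    by (rule ext, rule funpow_step_eq_sum_indicator[OF assms])
  ultimately show ?thesis
    by (simp add: mult.commute)
qed

lemma limit_distribution_step_invariant:
  assumes "\<eta>\<^sub>0 \<in> S"
  shows "(\<Sum>\<eta>\<in>S. limit_distribution \<eta>\<^sub>0 \<eta> * step h \<eta>) = (\<Sum>\<eta>\<in>S. limit_distribution \<eta>\<^sub>0 \<eta> * h \<eta>)"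
proof -
  have "(\<lambda>k. (step ^^ k) (step h) \<eta>\<^sub>0) \<longlonglongrightarrow> (\<Sum>\<eta>\<in>S. limit_distribution \<eta>\<^sub>0 \<eta> * h \<eta>)"
    using LIMSEQ_Suc[OF tendsto_funpow_step[OF assms, of h]]
    by (simp only: funpow_Suc_right comp_def)
  with tendsto_funpow_step[OF assms, of "step h"] show ?thesis
    by (rule LIMSEQ_unique)
qed

lemma distribution_limit_distribution:
  assumes "\<eta>\<^sub>0 \<in> S"
  shows "distribution (limit_distribution \<eta>\<^sub>0)"
proof -
  have "0 \<le> limit_distribution \<eta>\<^sub>0 \<zeta>" if "\<zeta> \<in> S" for \<zeta>
  proof -
    have "(\<lambda>k. (step ^^ k) (indicator {\<zeta>}) \<eta>\<^sub>0) \<longlonglongrightarrow> limit_distribution \<eta>\<^sub>0 \<zeta>"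
      using tendsto_limit_distribution[OF assms that] .
    moreover have "0 \<le> (step ^^ k) (indicator {\<zeta>}) \<eta>\<^sub>0" for k
      using assms by (intro funpow_step_nonneg) auto
    ultimately show ?thesis by (intro LIMSEQ_le_const) auto
  qed
  moreover have "(\<Sum>\<zeta>\<in>S. limit_distribution \<eta>\<^sub>0 \<zeta>) = 1"
    using tendsto_funpow_step[OF assms, of "\<lambda>_. 1"] funpow_step_const[OF assms]
    by (simp add: LIMSEQ_const_iff)
  ultimately show ?thesis
    by (simp add: distribution_def limit_distribution_def)
qed

lemma stationary_limit_distribution:
  assumes "\<eta>\<^sub>0 \<in> S"
  shows "stationary (limit_distribution \<eta>\<^sub>0)"
proof -
  have "evolve (limit_distribution \<eta>\<^sub>0) t \<zeta> = limit_distribution \<eta>\<^sub>0 \<zeta>" if "\<zeta> \<in> S" for t \<zeta>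
    using transition_invariant[OF limit_distribution_step_invariant[OF assms]] that finite_S
    by (simp add: evolve_def indicator_def if_distrib cong: if_cong)
  then show ?thesis
    using distribution_limit_distribution[OF assms] by (simp add: stationary_def)
qed

lemma evolve_tv_le:
  assumes \<mu>: "distribution \<mu>" and \<pi>: "stationary \<pi>" and "0 \<le> t"
  shows "(\<Sum>\<zeta>\<in>S. \<bar>evolve \<mu> t \<zeta> - \<pi> \<zeta>\<bar>) \<le> min 2 (C * exp (- (R * (1 - q) * t)))"
proof -
  define s where "s \<zeta> = sgn (evolve \<mu> t \<zeta> - \<pi> \<zeta>)" for \<zeta>
  define G where "G = transition t s"
  have s: "\<forall>\<zeta>\<in>S. \<bar>s \<zeta>\<bar> \<le> 1" by (simp add: s_def abs_sgn_eq)
  have "G \<eta> - G \<xi> \<le> min 2 (C * exp (- (R * (1 - q) * t)))" if "\<eta> \<in> S" "\<xi> \<in> S" for \<eta> \<xi>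
  proof -
    have "\<bar>G \<eta>\<bar> \<le> 1" "\<bar>G \<xi>\<bar> \<le> 1"
      using transition_abs_le[OF s] that \<open>0 \<le> t\<close> by (auto simp: G_def)
    moreover have "\<bar>G \<eta> - G \<xi>\<bar> \<le> C * exp (- (R * (1 - q) * t))"
      unfolding G_def using transition_oscillation[OF s that \<open>0 \<le> t\<close>] .
    ultimately show ?thesis by (simp add: abs_le_iff)
  qed
  note G_oscillation = this
  have "(\<Sum>\<zeta>\<in>S. s \<zeta> * \<pi> \<zeta>) = (\<Sum>\<zeta>\<in>S. s \<zeta> * evolve \<pi> t \<zeta>)"
    using \<pi> \<open>0 \<le> t\<close> by (intro sum.cong) (auto simp: stationary_def)
  then have "(\<Sum>\<zeta>\<in>S. \<bar>evolve \<mu> t \<zeta> - \<pi> \<zeta>\<bar>) = (\<Sum>\<zeta>\<in>S. s \<zeta> * evolve \<mu> t \<zeta>) - (\<Sum>\<zeta>\<in>S. s \<zeta> * evolve \<pi> t \<zeta>)"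
    by (simp add: s_def abs_sgn sum_subtractf left_diff_distrib mult.commute)
  also have "\<dots> = (\<Sum>\<eta>\<in>S. \<mu> \<eta> * G \<eta>) - (\<Sum>\<xi>\<in>S. \<pi> \<xi> * G \<xi>)"
    by (simp only: evolve_sum G_def)
  also have "\<dots> \<le> min 2 (C * exp (- (R * (1 - q) * t)))"
    using \<pi> G_oscillation by (intro distribution_sum_diff_le[OF \<mu>]) (auto simp: stationary_def)
  finally show ?thesis .
qed

lemma ex1_stationary: "\<exists>!\<pi>. stationary \<pi>"
proof (rule ex_ex1I)
  obtain \<eta>\<^sub>0 where "\<eta>\<^sub>0 \<in> S" using nonempty by blast
  then show "\<exists>\<pi>. stationary \<pi>" using stationary_limit_distribution by blast
next
  fix \<pi> \<pi>' assume \<pi>: "stationary \<pi>" and \<pi>': "stationary \<pi>'"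
  let ?d = "\<Sum>\<zeta>\<in>S. \<bar>\<pi> \<zeta> - \<pi>' \<zeta>\<bar>"
  have bound: "?d \<le> C * exp (- (R * (1 - q))) ^ n" for n
  proof -
    have "?d = (\<Sum>\<zeta>\<in>S. \<bar>evolve \<pi> (real n) \<zeta> - \<pi>' \<zeta>\<bar>)"
      using \<pi> by (intro sum.cong) (auto simp: stationary_def)
    also have "\<dots> \<le> C * exp (- (R * (1 - q) * real n))"
      using evolve_tv_le[of \<pi> \<pi>' "real n"] \<pi> \<pi>' by (simp add: stationary_def)
    finally show ?thesis
      by (simp add: exp_of_nat_mult[symmetric] mult_ac)
  qed
  have "(\<lambda>n. C * exp (- (R * (1 - q))) ^ n) \<longlonglongrightarrow> 0"
    using rate_pos q_less_one by (intro tendsto_mult_right_zero LIMSEQ_realpow_zero) auto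
  then have "?d \<le> 0"
    by (rule LIMSEQ_le_const) (use bound in auto)
  then have "?d = 0"
    by (simp add: order_antisym sum_nonneg)
  then have "\<forall>\<zeta>\<in>S. \<pi> \<zeta> = \<pi>' \<zeta>"
    using finite_S by (simp add: sum_nonneg_eq_0_iff)
  moreover have "\<forall>\<zeta>. \<zeta> \<notin> S \<longrightarrow> \<pi> \<zeta> = \<pi>' \<zeta>"
    using \<pi> \<pi>' by (simp add: stationary_def distribution_def)
  ultimately show "\<pi> = \<pi>'"
    by blast
qed

lemma tv_distance_to_stationary_le:
  assumes "distribution \<mu>" and "0 \<le> t"
  shows "(\<Sum>\<zeta>\<in>S. \<bar>evolve \<mu> t \<zeta> - (THE \<pi>. stationary \<pi>) \<zeta>\<bar>) \<le> min 2 (C * exp (- (R * (1 - q) * t)))"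
  using evolve_tv_le[OF assms(1) theI'[OF ex1_stationary] assms(2)] .

end

section \<open>The boundary-driven exclusion process\<close>

text \<open>N + 2 is the total rate of all updates (2N bonds at rate 1/2, two boundary sites at rate 1), so
  the generator is \<open>gen = (N + 2) (P - I)\<close> with the stochastic operator P = jump_average.\<close>

definition jump_rate :: "nat \<Rightarrow> real" where
  "jump_rate N = real N + 2"

definition jump_average :: "nat \<Rightarrow> real \<Rightarrow> real \<Rightarrow> (config \<Rightarrow> real) \<Rightarrow> config \<Rightarrow> real" where
  "jump_average N rp rm g \<eta> = (1 / jump_rate N) *
     ((1/2) * (\<Sum>x\<in>{- int N .. int N - 1}. g (swp x \<eta>))
      + rp * g (\<eta>(int N := True)) + (1 - rp) * g (\<eta>(int N := False))
      + rm * g (\<eta>(- int N := True)) + (1 - rm) * g (\<eta>(- int N := False)))"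

definition jump_kernel :: "nat \<Rightarrow> real \<Rightarrow> real \<Rightarrow> config \<Rightarrow> config \<Rightarrow> real" where
  "jump_kernel N rp rm \<eta> \<xi> = jump_average N rp rm (indicator {\<xi>}) \<eta>"

lemma gen_eq_jump_average: "gen N rp rm g \<eta> = jump_rate N * (jump_average N rp rm g \<eta> - g \<eta>)"
proof -
  have bonds: "(\<Sum>x\<in>{- int N .. int N - 1}. g (swp x \<eta>) - g \<eta>)
      = (\<Sum>x\<in>{- int N .. int N - 1}. g (swp x \<eta>)) - 2 * N * g \<eta>"
    by (simp add: sum_subtractf)
  show ?thesis
    unfolding gen_def jump_average_def jump_rate_def bonds by (simp add: field_simps)
qed

lemma jump_average_sum:
  "jump_average N rp rm (\<lambda>\<xi>. \<Sum>i\<in>I. c i * h i \<xi>) \<eta> = (\<Sum>i\<in>I. c i * jump_average N rp rm (h i) \<eta>)"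
  unfolding jump_average_def
  by (simp add: sum_distrib_left sum.distrib ring_distribs mult.left_commute sum.swap[of _ "{- int N .. int N - 1}"])

lemma swp_configs: "\<eta> \<in> configs N \<Longrightarrow> x \<in> {- int N .. int N - 1} \<Longrightarrow> swp x \<eta> \<in> configs N"
  unfolding configs_def swp_def by auto

lemma upd_configs: "\<eta> \<in> configs N \<Longrightarrow> z \<in> {- int N .. int N} \<Longrightarrow> \<eta>(z := b) \<in> configs N"
  unfolding configs_def by auto

lemma finite_configs: "finite (configs N)"
proof -
  have "configs N \<subseteq> (\<lambda>A x. x \<in> A) ` Pow {- int N .. int N}"
  proof
    fix \<eta> assume "\<eta> \<in> configs N"
    then have "{x. \<eta> x} \<in> Pow {- int N .. int N}" unfolding configs_def by auto
    then show "\<eta> \<in> (\<lambda>A x. x \<in> A) ` Pow {- int N .. int N}" by force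
  qed
  then show ?thesis by (rule finite_subset) simp
qed

lemma jump_average_cong:
  assumes "\<forall>\<xi>\<in>configs N. g \<xi> = h \<xi>" and "\<eta> \<in> configs N"
  shows "jump_average N rp rm g \<eta> = jump_average N rp rm h \<eta>"
proof -
  have "(\<Sum>x\<in>{- int N .. int N - 1}. g (swp x \<eta>)) = (\<Sum>x\<in>{- int N .. int N - 1}. h (swp x \<eta>))"
    using assms swp_configs by (intro sum.cong) auto
  moreover have "g (\<eta>(z := b)) = h (\<eta>(z := b))" if "z \<in> {- int N .. int N}" for z b
    using assms upd_configs that by auto
  ultimately show ?thesis
    unfolding jump_average_def by simp
qed

lemma jump_average_eq_kernel_sum:
  assumes "\<eta> \<in> configs N"
  shows "jump_average N rp rm g \<eta> = (\<Sum>\<xi>\<in>configs N. jump_kernel N rp rm \<eta> \<xi> * g \<xi>)"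
proof -
  have "\<forall>\<xi>\<in>configs N. g \<xi> = (\<Sum>\<zeta>\<in>configs N. g \<zeta> * indicator {\<zeta>} \<xi>)"
    using finite_configs by (simp add: indicator_def if_distrib cong: if_cong)
  then have "jump_average N rp rm g \<eta> = jump_average N rp rm (\<lambda>\<xi>. \<Sum>\<zeta>\<in>configs N. g \<zeta> * indicator {\<zeta>} \<xi>) \<eta>"
    using assms by (rule jump_average_cong)
  then show ?thesis
    by (simp add: jump_average_sum jump_kernel_def mult.commute)
qed

lemma uniformized_chain_exclusion:
  assumes "0 \<le> rp" "rp \<le> 1" "0 \<le> rm" "rm \<le> 1"
  shows "uniformized_chain (configs N) (jump_kernel N rp rm) (jump_rate N)"
proof
  fix \<eta> \<xi> assume "\<eta> \<in> configs N" "\<xi> \<in> configs N"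
  show "0 \<le> jump_kernel N rp rm \<eta> \<xi>"
    using assms unfolding jump_kernel_def jump_average_def jump_rate_def
    by (intro mult_nonneg_nonneg add_nonneg_nonneg sum_nonneg) auto
next
  fix \<eta> assume "\<eta> \<in> configs N"
  then have "(\<Sum>\<xi>\<in>configs N. jump_kernel N rp rm \<eta> \<xi>) = jump_average N rp rm (\<lambda>_. 1) \<eta>"
    by (simp add: jump_average_eq_kernel_sum)
  also have "\<dots> = 1"
    unfolding jump_average_def jump_rate_def by (simp add: field_simps)
  finally show "(\<Sum>\<xi>\<in>configs N. jump_kernel N rp rm \<eta> \<xi>) = 1" .
qed (simp_all add: finite_configs jump_rate_def)

section \<open>Path coupling in a weighted Hamming distance\<close>

definition site_weight :: "nat \<Rightarrow> int \<Rightarrow> real" where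
  "site_weight N y = (real N + 1)^2 - (real_of_int y)^2"

definition weighted_distance :: "nat \<Rightarrow> config \<Rightarrow> config \<Rightarrow> real" where
  "weighted_distance N \<eta> \<xi> = (\<Sum>y\<in>{- int N .. int N}. of_bool (\<eta> y \<noteq> \<xi> y) * site_weight N y)"

lemma site_weight_ge: "y \<in> {- int N .. int N} \<Longrightarrow> 2 * real N + 1 \<le> site_weight N y"
proof -
  assume "y \<in> {- int N .. int N}"
  then have "\<bar>real_of_int y\<bar> \<le> real N" by auto
  then have "(real_of_int y)^2 \<le> (real N)^2" by (metis abs_ge_zero power2_abs power_mono)
  then show ?thesis unfolding site_weight_def by (simp add: power2_eq_square algebra_simps)
qed

lemma site_weight_le: "site_weight N y \<le> (real N + 1)^2"
  unfolding site_weight_def by simp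

lemma weighted_distance_nonneg: "0 \<le> weighted_distance N \<eta> \<xi>"
  unfolding weighted_distance_def
  by (intro sum_nonneg mult_nonneg_nonneg) (auto intro: order_trans[OF _ site_weight_ge])

lemma weighted_distance_le: "weighted_distance N \<eta> \<xi> \<le> (2 * real N + 1) * (real N + 1)^2"
proof -
  have "weighted_distance N \<eta> \<xi> \<le> (\<Sum>y\<in>{- int N .. int N}. (real N + 1)^2)"
    unfolding weighted_distance_def
    using site_weight_le site_weight_ge order_trans[OF _ site_weight_ge]
    by (intro sum_mono) (auto intro: order_trans[OF _ site_weight_le])
  then show ?thesis by simp
qed

lemma weighted_distance_ge:
  assumes "\<eta> \<in> configs N" "\<xi> \<in> configs N" "\<eta> \<noteq> \<xi>"
  shows "2 * real N + 1 \<le> weighted_distance N \<eta> \<xi>"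
proof -
  obtain y where y: "\<eta> y \<noteq> \<xi> y" using assms(3) by auto
  then have yV: "y \<in> {- int N .. int N}" using assms(1,2) unfolding configs_def by auto
  have "of_bool (\<eta> y \<noteq> \<xi> y) * site_weight N y \<le> weighted_distance N \<eta> \<xi>"
    unfolding weighted_distance_def using yV
    by (intro member_le_sum) (auto intro: order_trans[OF _ site_weight_ge])
  then show ?thesis using y site_weight_ge[OF yV] by simp
qed

lemma weighted_distance_swp:
  assumes "x \<in> {- int N .. int N - 1}"
  shows "weighted_distance N (swp x \<eta>) (swp x \<xi>) = weighted_distance N \<eta> \<xi>
    + (of_bool (\<eta> (x + 1) \<noteq> \<xi> (x + 1)) - of_bool (\<eta> x \<noteq> \<xi> x)) * (site_weight N x - site_weight N (x + 1))"
proof -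
  let ?V = "{- int N .. int N}"
  let ?F = "\<lambda>y. (of_bool (swp x \<eta> y \<noteq> swp x \<xi> y) - of_bool (\<eta> y \<noteq> \<xi> y)) * site_weight N y"
  have "weighted_distance N (swp x \<eta>) (swp x \<xi>) - weighted_distance N \<eta> \<xi> = (\<Sum>y\<in>?V. ?F y)"
    unfolding weighted_distance_def by (simp only: sum_subtractf[symmetric] left_diff_distrib)
  also have "\<dots> = (\<Sum>y\<in>{x, x + 1}. ?F y)"
    using assms by (intro sum.mono_neutral_right) (auto simp: swp_def)
  also have "\<dots> = (of_bool (\<eta> (x + 1) \<noteq> \<xi> (x + 1)) - of_bool (\<eta> x \<noteq> \<xi> x)) * (site_weight N x - site_weight N (x + 1))"
    by (simp add: swp_def algebra_simps)
  finally show ?thesis by simp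
qed

lemma weighted_distance_upd:
  assumes "z \<in> {- int N .. int N}"
  shows "weighted_distance N (\<eta>(z := b)) (\<xi>(z := b)) = weighted_distance N \<eta> \<xi> - of_bool (\<eta> z \<noteq> \<xi> z) * site_weight N z"
proof -
  let ?F = "\<lambda>y. (of_bool ((\<eta>(z := b)) y \<noteq> (\<xi>(z := b)) y) - of_bool (\<eta> y \<noteq> \<xi> y)) * site_weight N y"
  have "weighted_distance N (\<eta>(z := b)) (\<xi>(z := b)) - weighted_distance N \<eta> \<xi> = (\<Sum>y\<in>{- int N .. int N}. ?F y)"
    unfolding weighted_distance_def by (simp only: sum_subtractf[symmetric] left_diff_distrib)
  also have "\<dots> = (\<Sum>y\<in>{z}. ?F y)"
    using assms by (intro sum.mono_neutral_right) auto
  finally show ?thesis by simp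
qed

lemma exchange_drift_eq:
  fixes \<delta> :: "int \<Rightarrow> real"
  assumes "0 < N"
  shows "(\<Sum>x\<in>{- int N .. int N - 1}. (\<delta> (x + 1) - \<delta> x) * (site_weight N x - site_weight N (x + 1)))
           = (\<delta> (int N) + \<delta> (- int N)) * (2 * real N - 1) - 2 * (\<Sum>y\<in>{- int N + 1 .. int N - 1}. \<delta> y)"
proof -
  let ?E = "{- int N .. int N - 1}" and ?I = "{- int N + 1 .. int N - 1}"
  have slope: "site_weight N x - site_weight N (x + 1) = 2 * x + 1" for x
    unfolding site_weight_def by (simp add: power2_eq_square algebra_simps)
  have E_left: "?E = insert (- int N) ?I" and E_right: "{- int N + 1 .. int N} = insert (int N) ?I"
    using assms by auto
  have "(\<Sum>x\<in>?E. \<delta> (x + 1) * (2 * x + 1)) = (\<Sum>y\<in>{- int N + 1 .. int N}. \<delta> y * (2 * y - 1))"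
    by (rule sum.reindex_bij_witness[of _ "\<lambda>y. y - 1" "\<lambda>x. x + 1"]) (auto simp: algebra_simps)
  then have right: "(\<Sum>x\<in>?E. \<delta> (x + 1) * (2 * x + 1)) = \<delta> (int N) * (2 * real N - 1) + (\<Sum>y\<in>?I. \<delta> y * (2 * y - 1))"
    unfolding E_right by simp
  have left: "(\<Sum>x\<in>?E. \<delta> x * (2 * x + 1)) = \<delta> (- int N) * (1 - 2 * real N) + (\<Sum>y\<in>?I. \<delta> y * (2 * y + 1))"
    unfolding E_left by simp
  have inner: "(\<Sum>y\<in>?I. \<delta> y * (2 * y - 1)) - (\<Sum>y\<in>?I. \<delta> y * (2 * y + 1)) = - 2 * (\<Sum>y\<in>?I. \<delta> y)"
    by (simp add: sum_subtractf[symmetric] sum_distrib_left algebra_simps)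
  have "(\<Sum>x\<in>?E. (\<delta> (x + 1) - \<delta> x) * (site_weight N x - site_weight N (x + 1)))
      = (\<Sum>x\<in>?E. \<delta> (x + 1) * (2 * x + 1)) - (\<Sum>x\<in>?E. \<delta> x * (2 * x + 1))"
    unfolding slope by (simp add: sum_subtractf[symmetric] algebra_simps)
  also have "\<dots> = (\<delta> (int N) + \<delta> (- int N)) * (2 * real N - 1) - 2 * (\<Sum>y\<in>?I. \<delta> y)"
    unfolding right left using inner by (simp add: algebra_simps)
  finally show ?thesis .
qed

lemma site_weight_drift:
  fixes \<delta> :: "int \<Rightarrow> real"
  assumes "0 < N" and \<delta>: "\<And>y. 0 \<le> \<delta> y"
  shows "(1/2) * (\<Sum>x\<in>{- int N .. int N - 1}. (\<delta> (x + 1) - \<delta> x) * (site_weight N x - site_weight N (x + 1)))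
           - \<delta> (int N) * site_weight N (int N) - \<delta> (- int N) * site_weight N (- int N)
         \<le> - (\<Sum>y\<in>{- int N .. int N}. \<delta> y * site_weight N y) / (real N + 1)^2"
proof -
  have boundary: "site_weight N (int N) = 2 * N + 1" "site_weight N (- int N) = 2 * N + 1"
    unfolding site_weight_def by (simp_all add: power2_eq_square algebra_simps)
  have V: "{- int N .. int N} = insert (- int N) (insert (int N) {- int N + 1 .. int N - 1})"
    using assms(1) by auto
  have products: "0 \<le> real N * \<delta> (int N)" "0 \<le> real N * \<delta> (- int N)"
    using \<delta> by auto
  have "(1/2) * (\<Sum>x\<in>{- int N .. int N - 1}. (\<delta> (x + 1) - \<delta> x) * (site_weight N x - site_weight N (x + 1)))
           - \<delta> (int N) * site_weight N (int N) - \<delta> (- int N) * site_weight N (- int N)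
      \<le> - (\<Sum>y\<in>{- int N .. int N}. \<delta> y)"
    using assms(1) \<delta>[of "int N"] \<delta>[of "- int N"] unfolding exchange_drift_eq[OF assms(1)] boundary V
    by (simp add: algebra_simps) (use products in linarith)
  also have "\<dots> \<le> - (\<Sum>y\<in>{- int N .. int N}. \<delta> y * site_weight N y) / (real N + 1)^2"
  proof -
    have "(\<Sum>y\<in>{- int N .. int N}. \<delta> y * site_weight N y) \<le> (\<Sum>y\<in>{- int N .. int N}. \<delta> y * (real N + 1)^2)"
      using \<delta> site_weight_le by (intro sum_mono mult_left_mono) auto
    then show ?thesis
      by (simp add: sum_distrib_right[symmetric] field_simps)
  qed
  finally show ?thesis .
qed

lemma abs_convex_combination_le:
  fixes r x y B :: real
  assumes "0 \<le> r" "r \<le> 1" "\<bar>x\<bar> \<le> B" "\<bar>y\<bar> \<le> B"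
  shows "\<bar>r * x + (1 - r) * y\<bar> \<le> B"
proof -
  have "\<bar>r * x + (1 - r) * y\<bar> \<le> r * \<bar>x\<bar> + (1 - r) * \<bar>y\<bar>"
    using assms(1,2) by (metis abs_mult abs_of_nonneg abs_triangle_ineq diff_ge_0_iff_ge)
  also have "\<dots> \<le> r * B + (1 - r) * B"
    using assms by (intro add_mono mult_left_mono) auto
  finally show ?thesis by (simp add: algebra_simps)
qed

lemma jump_average_diff:
  "jump_average N rp rm g \<eta> - jump_average N rp rm g \<xi> = (1 / jump_rate N) *
     ((1/2) * (\<Sum>x\<in>{- int N .. int N - 1}. g (swp x \<eta>) - g (swp x \<xi>))
      + (rp * (g (\<eta>(int N := True)) - g (\<xi>(int N := True)))
         + (1 - rp) * (g (\<eta>(int N := False)) - g (\<xi>(int N := False))))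
      + (rm * (g (\<eta>(- int N := True)) - g (\<xi>(- int N := True)))
         + (1 - rm) * (g (\<eta>(- int N := False)) - g (\<xi>(- int N := False)))))"
  unfolding jump_average_def by (simp add: sum_subtractf algebra_simps)

lemma lipschitz_exchanges_le:
  assumes g: "lipschitz_wrt (configs N) (weighted_distance N) K g"
    and "\<eta> \<in> configs N" "\<xi> \<in> configs N"
  shows "\<bar>\<Sum>x\<in>{- int N .. int N - 1}. g (swp x \<eta>) - g (swp x \<xi>)\<bar>
    \<le> K * (2 * N * weighted_distance N \<eta> \<xi> + (\<Sum>x\<in>{- int N .. int N - 1}.
          (of_bool (\<eta> (x + 1) \<noteq> \<xi> (x + 1)) - of_bool (\<eta> x \<noteq> \<xi> x)) * (site_weight N x - site_weight N (x + 1))))"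
proof -
  let ?E = "{- int N .. int N - 1}"
  have Lg: "\<bar>g a - g b\<bar> \<le> K * weighted_distance N a b" if "a \<in> configs N" "b \<in> configs N" for a b
    using g that unfolding lipschitz_wrt_def by blast
  have "\<bar>\<Sum>x\<in>?E. g (swp x \<eta>) - g (swp x \<xi>)\<bar> \<le> (\<Sum>x\<in>?E. K * weighted_distance N (swp x \<eta>) (swp x \<xi>))"
    using assms(2,3) by (intro order_trans[OF sum_abs] sum_mono Lg swp_configs) auto
  also have "\<dots> = K * (\<Sum>x\<in>?E. weighted_distance N \<eta> \<xi> + (of_bool (\<eta> (x + 1) \<noteq> \<xi> (x + 1)) - of_bool (\<eta> x \<noteq> \<xi> x))
      * (site_weight N x - site_weight N (x + 1)))"
    by (simp add: weighted_distance_swp sum_distrib_left)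
  finally show ?thesis
    by (simp add: sum.distrib)
qed

lemma lipschitz_boundary_update_le:
  assumes g: "lipschitz_wrt (configs N) (weighted_distance N) K g"
    and "\<eta> \<in> configs N" "\<xi> \<in> configs N" "z \<in> {- int N .. int N}" "0 \<le> r" "r \<le> 1"
  shows "\<bar>r * (g (\<eta>(z := True)) - g (\<xi>(z := True))) + (1 - r) * (g (\<eta>(z := False)) - g (\<xi>(z := False)))\<bar>
    \<le> K * (weighted_distance N \<eta> \<xi> - of_bool (\<eta> z \<noteq> \<xi> z) * site_weight N z)"
proof -
  have "\<bar>g (\<eta>(z := b)) - g (\<xi>(z := b))\<bar> \<le> K * (weighted_distance N \<eta> \<xi> - of_bool (\<eta> z \<noteq> \<xi> z) * site_weight N z)" for b
    using g upd_configs[OF assms(2,4), of b] upd_configs[OF assms(3,4), of b]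
      weighted_distance_upd[OF assms(4), where \<eta>=\<eta> and \<xi>=\<xi> and b=b]
    unfolding lipschitz_wrt_def by (metis (no_types, lifting))
  then show ?thesis
    using assms(5,6) by (intro abs_convex_combination_le)
qed

text \<open>Path coupling: both configurations perform the same move. An exchange moves a discrepancy to
  a neighbouring site and a boundary update at \<open>\<plusminus>N\<close> erases it, so by the drift inequality of the
  site weights the weighted distance contracts on average.\<close>

lemma lipschitz_jump_average:
  assumes "0 < N" "0 \<le> rp" "rp \<le> 1" "0 \<le> rm" "rm \<le> 1" and "0 \<le> K"
    and g: "lipschitz_wrt (configs N) (weighted_distance N) K g"
  shows "lipschitz_wrt (configs N) (weighted_distance N)
           (K * (1 - 1 / ((real N + 1)^2 * jump_rate N))) (jump_average N rp rm g)"
  unfolding lipschitz_wrt_def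
proof (intro ballI)
  fix \<eta> \<xi> assume \<eta>: "\<eta> \<in> configs N" and \<xi>: "\<xi> \<in> configs N"
  let ?d = "weighted_distance N \<eta> \<xi>" and ?w = "site_weight N"
  let ?\<delta> = "\<lambda>y. of_bool (\<eta> y \<noteq> \<xi> y) :: real"
  let ?X = "\<Sum>x\<in>{- int N .. int N - 1}. (?\<delta> (x + 1) - ?\<delta> x) * (?w x - ?w (x + 1))"
  have rate_pos: "0 < jump_rate N"
    by (simp add: jump_rate_def)
  have "\<bar>jump_average N rp rm g \<eta> - jump_average N rp rm g \<xi>\<bar>
      \<le> (1 / jump_rate N) * ((1/2) * (K * (2 * N * ?d + ?X))
          + K * (?d - ?\<delta> (int N) * ?w (int N)) + K * (?d - ?\<delta> (- int N) * ?w (- int N)))"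
    using lipschitz_exchanges_le[OF g \<eta> \<xi>]
      lipschitz_boundary_update_le[OF g \<eta> \<xi> _ assms(2,3), of "int N"]
      lipschitz_boundary_update_le[OF g \<eta> \<xi> _ assms(4,5), of "- int N"] rate_pos
    unfolding jump_average_diff abs_mult abs_of_pos[OF rate_pos] abs_divide abs_one
    by (intro mult_left_mono) (auto simp: abs_le_iff)
  also have "\<dots> = K / jump_rate N * (jump_rate N * ?d
      + ((1/2) * ?X - ?\<delta> (int N) * ?w (int N) - ?\<delta> (- int N) * ?w (- int N)))"
    by (simp add: jump_rate_def algebra_simps)
  also have "\<dots> \<le> K / jump_rate N * (jump_rate N * ?d - ?d / (real N + 1)^2)"
    using site_weight_drift[OF assms(1), of ?\<delta>] \<open>0 \<le> K\<close> rate_pos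
    by (intro mult_left_mono) (auto simp: weighted_distance_def)
  also have "\<dots> = K * (1 - 1 / ((real N + 1)^2 * jump_rate N)) * ?d"
    using rate_pos by (simp add: field_simps)
  finally show "\<bar>jump_average N rp rm g \<eta> - jump_average N rp rm g \<xi>\<bar>
      \<le> K * (1 - 1 / ((real N + 1)^2 * jump_rate N)) * ?d" .
qed

section \<open>Total variation decay\<close>

context
  fixes N :: nat and rp rm :: real
  assumes N_pos: "0 < N" and rates: "0 \<le> rp" "rp \<le> 1" "0 \<le> rm" "rm \<le> 1"
begin

interpretation exclusion: uniformized_chain "configs N" "jump_kernel N rp rm" "jump_rate N"
  using uniformized_chain_exclusion[OF rates] .

lemma exclusion_step_eq: "\<eta> \<in> configs N \<Longrightarrow> exclusion.step g \<eta> = jump_average N rp rm g \<eta>"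
  by (simp add: exclusion.step_def jump_average_eq_kernel_sum)

lemma funpow_gen_eq: "\<eta> \<in> configs N \<Longrightarrow> (gen N rp rm ^^ n) f \<eta> = (exclusion.generator ^^ n) f \<eta>"
proof (induction n arbitrary: \<eta>)
  case (Suc n)
  have average: "jump_average N rp rm ((gen N rp rm ^^ n) f) \<eta> = exclusion.step ((exclusion.generator ^^ n) f) \<eta>"
    using Suc by (simp add: jump_average_eq_kernel_sum exclusion.step_def)
  have "(gen N rp rm ^^ Suc n) f \<eta> = jump_rate N * (jump_average N rp rm ((gen N rp rm ^^ n) f) \<eta> - (gen N rp rm ^^ n) f \<eta>)"
    by (simp only: funpow.simps comp_def gen_eq_jump_average)
  also have "\<dots> = jump_rate N * (exclusion.step ((exclusion.generator ^^ n) f) \<eta> - (exclusion.generator ^^ n) f \<eta>)"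
    by (simp only: average Suc.IH[OF Suc.prems])
  also have "\<dots> = (exclusion.generator ^^ Suc n) f \<eta>"
    by (simp add: exclusion.generator_def)
  finally show ?case .
qed simp

lemma law_eq_evolve: "law N rp rm = exclusion.evolve"
proof (intro ext)
  fix \<mu> t \<zeta>
  have "semigroup N rp rm t (indicator {\<zeta>}) \<eta> = exclusion.transition t (indicator {\<zeta>}) \<eta>" if "\<eta> \<in> configs N" for \<eta>
    using funpow_gen_eq[OF that] by (simp add: semigroup_def exclusion.transition_def)
  moreover have "(\<lambda>\<xi>. if \<xi> = \<zeta> then 1 else 0) = (indicator {\<zeta>} :: config \<Rightarrow> real)"
    by (auto simp: indicator_def)
  ultimately show "law N rp rm \<mu> t \<zeta> = exclusion.evolve \<mu> t \<zeta>"
    unfolding law_def exclusion.evolve_def by simp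
qed

lemma prob_on_eq_distribution: "prob_on N = exclusion.distribution"
  by (intro ext) (simp add: prob_on_def exclusion.distribution_def)

lemma stat_eq_stationary: "stat N rp rm = (THE \<pi>. exclusion.stationary \<pi>)"
  unfolding stat_def exclusion.stationary_def law_eq_evolve prob_on_eq_distribution ..

lemma exclusion_step_contraction:
  assumes "0 \<le> K" and "lipschitz_wrt (configs N) (weighted_distance N) K g"
  shows "lipschitz_wrt (configs N) (weighted_distance N)
           (K * (1 - 1 / ((real N + 1)^2 * jump_rate N))) (exclusion.step g)"
  using lipschitz_jump_average[OF N_pos rates assms]
  by (simp add: lipschitz_wrt_def exclusion_step_eq)

lemma mixing_exclusion:
  "mixing_uniformized_chain (configs N) (jump_kernel N rp rm) (jump_rate N)
     (2 * (real N + 1)^2) (1 - 1 / ((real N + 1)^2 * jump_rate N))"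
proof -
  let ?q = "1 - 1 / ((real N + 1)^2 * jump_rate N)"
  have "1 * 1 \<le> (real N + 1)^2 * jump_rate N"
    by (intro mult_mono) (simp_all add: jump_rate_def one_le_power)
  then have q: "0 \<le> ?q" "?q < 1"
    by (simp_all add: field_simps)
  have "\<bar>(exclusion.step ^^ k) g \<eta> - (exclusion.step ^^ k) g \<xi>\<bar>
      \<le> 2 * ((2 * real N + 1) * (real N + 1)^2) / (2 * real N + 1) * ?q^k"
    if "\<forall>\<xi>\<in>configs N. \<bar>g \<xi>\<bar> \<le> 1" "\<eta> \<in> configs N" "\<xi> \<in> configs N" for g \<eta> \<xi> k
    using exclusion_step_contraction q(1) weighted_distance_nonneg weighted_distance_ge weighted_distance_le that
    by (intro exclusion.lipschitz_contraction_mixing[where d = "weighted_distance N"]) auto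
  then show ?thesis
    using q by unfold_locales (auto simp: configs_def)
qed

lemma exclusion_tv_le:
  assumes "prob_on N \<mu>" and "0 \<le> t"
  shows "tvnorm N (\<lambda>\<eta>. law N rp rm \<mu> t \<eta> - stat N rp rm \<eta>)
           \<le> min 2 (2 * (real N + 1)^2 * exp (- t / (real N + 1)^2))"
proof -
  have "0 < jump_rate N"
    by (simp add: jump_rate_def)
  then have "jump_rate N * (1 - (1 - 1 / ((real N + 1)^2 * jump_rate N))) * t = t / (real N + 1)^2"
    by (simp add: field_simps)
  moreover have "exclusion.distribution \<mu>"
    using assms(1) by (simp add: prob_on_eq_distribution)
  ultimately show ?thesis
    using mixing_uniformized_chain.tv_distance_to_stationary_le[OF mixing_exclusion _ assms(2)]
    by (simp add: tvnorm_def law_eq_evolve stat_eq_stationary)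
qed

end

lemma min_two_square_le: "0 \<le> x \<Longrightarrow> min 2 (8 * x^2) \<le> 8 * (x::real)"
proof (cases "x \<le> 1")
  case True
  moreover assume "0 \<le> x"
  ultimately have "x * x \<le> x" by (intro mult_left_le_one_le) auto
  then show ?thesis by (simp add: power2_eq_square)
qed simp

lemma min_exp_decay_le:
  fixes n t :: real
  assumes "1 \<le> n" and "0 \<le> t"
  shows "min 2 (2 * (n + 1)^2 * exp (- t / (n + 1)^2)) \<le> 8 * n * exp (- (1/8) * t / n^2)"
proof -
  define u where "u = exp (- (1/8) * t / n^2)"
  have square: "(n + 1)^2 \<le> 4 * n^2"
    using assms(1) by (simp add: power2_eq_square algebra_simps)
      (use mult_right_mono[OF assms(1), of n] in linarith)
  then have "t / (4 * n^2) \<le> t / (n + 1)^2"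
    using assms by (intro divide_left_mono) auto
  then have "exp (- t / (n + 1)^2) \<le> u^2"
    unfolding u_def by (simp add: exp_of_nat_mult[symmetric] field_simps)
  then have "2 * (n + 1)^2 * exp (- t / (n + 1)^2) \<le> 2 * (4 * n^2) * u^2"
    using square by (intro mult_mono) auto
  then have "min 2 (2 * (n + 1)^2 * exp (- t / (n + 1)^2)) \<le> min 2 (8 * (n * u)^2)"
    by (simp add: power_mult_distrib min.coboundedI2)
  also have "\<dots> \<le> 8 * (n * u)"
    using assms(1) by (intro min_two_square_le) (simp add: u_def)
  finally show ?thesis
    by (simp add: u_def mult.assoc)
qed

theorem theorem2p1:
  fixes rp rm :: real
  assumes "rp \<le> 1" and "rm < rp" and "0 \<le> rm"
  shows "\<exists>c b::real. b > 0 \<and>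
    (\<forall>N::nat. N > 0 \<longrightarrow> (\<forall>\<mu>. prob_on N \<mu> \<longrightarrow> (\<forall>t::real. t > 0 \<longrightarrow>
       tvnorm N (\<lambda>\<eta>. law N rp rm \<mu> t \<eta> - stat N rp rm \<eta>)
         \<le> c * real N * exp (- b * t / (real N)\<^sup>2))))"
proof (rule exI[of _ 8], rule exI[of _ "1/8"], intro conjI allI impI)
  fix N :: nat and \<mu> and t :: real
  assume "N > 0" "prob_on N \<mu>" "t > 0"
  have rates: "0 \<le> rp" "rp \<le> 1" "0 \<le> rm" "rm \<le> 1"
    using assms by auto
  have "tvnorm N (\<lambda>\<eta>. law N rp rm \<mu> t \<eta> - stat N rp rm \<eta>)
      \<le> min 2 (2 * (real N + 1)^2 * exp (- t / (real N + 1)^2))"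
    using \<open>N > 0\<close> rates \<open>prob_on N \<mu>\<close> \<open>t > 0\<close> by (intro exclusion_tv_le) auto
  also have "\<dots> \<le> 8 * real N * exp (- (1/8) * t / (real N)\<^sup>2)"
    using \<open>N > 0\<close> \<open>t > 0\<close> by (intro min_exp_decay_le) auto
  finally show "tvnorm N (\<lambda>\<eta>. law N rp rm \<mu> t \<eta> - stat N rp rm \<eta>) \<le> 8 * real N * exp (- (1/8) * t / (real N)\<^sup>2)" .
qed simp

end
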